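(* The functors $\varepsilon_C:Sd(C)\to C$ are natural in $C$: for every functor $f:C\to D$ between small categories, $f\circ\varepsilon_C=\varepsilon_D\circ Sd(f)$. Hence they form a natural transformation $\varepsilon:Sd\Rightarrow\mathrm{id}_{\mathcal{Cat}}$.
   Context: For a small category $C$: a $q$-simplex of the nerve $NC$ is a functor $X:[q]\to C$ ($[q]=\{0<\dots<q\}$), i.e. a chain of arrows $f_i:X_{i-1}\to X_i$; $q_X=q$; for $i\le j$, $X(i\to j)$ denotes the composite $X_i\to X_j$. $X$ is non-degenerate if no $f_i$ is an identity. $\Delta/C$ has all simplices as objects and as morphisms $X\to Y$ the order-preserving $\xi:[q_X]\to[q_Y]$ with $Y\circ\xi=X$, written $\xi_*$. For a $q$-simplex $X$ and surjective order-preserving $s:[q+1]\to[q]$ with order-preserving right inverses $d,d'$, $d_*,d'_*:X\to X\circ s$ are elementary equivalent; $\sim$ is the smallest equivalence relation on morphisms of $\Delta/C$ compatible with composition containing these pairs; $[\Delta/C]$ is the quotient category; $Sd(C)$ is its full subcategory on the non-degenerate simplices. $\varepsilon_C:Sd(C)\to C$ sends $X$ to $X_{q_X}$ and $[\xi_*]:X\to Y$ to $Y(\xi(q_X)\to q_Y)$. For a simplex $X=(f_1,\dots,f_q)$, $r(X)$ is the non-degenerate simplex obtained by deleting identity arrows, of dimension $p_X$, and $\alpha_X:[q_X]\to[p_X]$ is the surjective order-preserving map with $\alpha_X(i-1)=\alpha_X(i)$ iff $f_i$ is an identity, so $X=r(X)\circ\alpha_X$. For a functor $f:C\to D$, the functor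 $Sd(f):Sd(C)\to Sd(D)$ sends $X$ to $r(f\circ X)$ and $[\xi_*]:X\to Y$ to $[(\alpha_{f\circ Y}\circ\xi\circ\sigma)_*]$, where $\sigma$ is any order-preserving right inverse of $\alpha_{f\circ X}$. *)

theory Defs
  imports Main "HOL-Library.FuncSet"
begin

record ('o,'a) cat =
  Obj  :: "'o set"
  Arr  :: "'a set"
  Dom  :: "'a \<Rightarrow> 'o"
  Cod  :: "'a \<Rightarrow> 'o"
  Id   :: "'o \<Rightarrow> 'a"
  Comp :: "'a \<Rightarrow> 'a \<Rightarrow> 'a"   (* Comp C g f = g \<circ> f *)

definition category :: "('o,'a) cat \<Rightarrow> bool" where
  "category C \<longleftrightarrow>
     (\<forall>f\<in>Arr C. Dom C f \<in> Obj C \<and> Cod C f \<in> Obj C) \<and>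
     (\<forall>x\<in>Obj C. Id C x \<in> Arr C \<and> Dom C (Id C x) = x \<and> Cod C (Id C x) = x) \<and>
     (\<forall>f\<in>Arr C. \<forall>g\<in>Arr C. Cod C f = Dom C g \<longrightarrow>
        Comp C g f \<in> Arr C \<and> Dom C (Comp C g f) = Dom C f \<and> Cod C (Comp C g f) = Cod C g) \<and>
     (\<forall>f\<in>Arr C. Comp C f (Id C (Dom C f)) = f \<and> Comp C (Id C (Cod C f)) f = f) \<and>
     (\<forall>f\<in>Arr C. \<forall>g\<in>Arr C. \<forall>h\<in>Arr C. Cod C f = Dom C g \<longrightarrow> Cod C g = Dom C h \<longrightarrow>
        Comp C h (Comp C g f) = Comp C (Comp C h g) f)"

definition "functor" :: "('o,'a) cat \<Rightarrow> ('p,'b) cat \<Rightarrow> ('o \<Rightarrow> 'p) \<Rightarrow> ('a \<Rightarrow> 'b) \<Rightarrow> bool" where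
  "functor C D Fo Fa \<longleftrightarrow>
     (\<forall>x\<in>Obj C. Fo x \<in> Obj D) \<and>
     (\<forall>f\<in>Arr C. Fa f \<in> Arr D \<and> Dom D (Fa f) = Fo (Dom C f) \<and> Cod D (Fa f) = Fo (Cod C f)) \<and>
     (\<forall>x\<in>Obj C. Fa (Id C x) = Id D (Fo x)) \<and>
     (\<forall>f\<in>Arr C. \<forall>g\<in>Arr C. Cod C f = Dom C g \<longrightarrow> Fa (Comp C g f) = Comp D (Fa g) (Fa f))"

definition is_id :: "('o,'a) cat \<Rightarrow> 'a \<Rightarrow> bool" where
  "is_id C f \<longleftrightarrow> f = Id C (Dom C f)"

text \<open>A q-simplex X : [q] \<rightarrow> C is represented as the chain (X_0, [f_1,...,f_q])
  with f_i : X_(i-1) \<rightarrow> X_i (list index i-1).\<close>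
type_synonym ('o,'a) simplex = "'o \<times> 'a list"

definition dimS :: "('o,'a) simplex \<Rightarrow> nat" where
  "dimS X = length (snd X)"

definition objS :: "('o,'a) cat \<Rightarrow> ('o,'a) simplex \<Rightarrow> nat \<Rightarrow> 'o" where
  "objS C X i = (if i = 0 then fst X else Cod C (snd X ! (i - 1)))"

definition simplex :: "('o,'a) cat \<Rightarrow> ('o,'a) simplex \<Rightarrow> bool" where
  "simplex C X \<longleftrightarrow> fst X \<in> Obj C \<and>
     (\<forall>i < dimS X. snd X ! i \<in> Arr C \<and> Dom C (snd X ! i) = objS C X i)"

definition nondeg :: "('o,'a) cat \<Rightarrow> ('o,'a) simplex \<Rightarrow> bool" where
  "nondeg C X \<longleftrightarrow> simplex C X \<and> (\<forall>f \<in> set (snd X). \<not> is_id C f)"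

text \<open>X(i \<rightarrow> j) for i \<le> j: the composite f_j \<circ> ... \<circ> f_(i+1) (identity if i = j).\<close>
fun chain_comp :: "('o,'a) cat \<Rightarrow> ('o,'a) simplex \<Rightarrow> nat \<Rightarrow> nat \<Rightarrow> 'a" where
  "chain_comp C X i 0 = Id C (objS C X i)"
| "chain_comp C X i (Suc j) =
     (if i \<le> j then Comp C (snd X ! j) (chain_comp C X i j) else Id C (objS C X i))"

text \<open>Y \<circ> \<xi> for an order-preserving \<xi> : [q] \<rightarrow> [q_Y].\<close>
definition precomp :: "('o,'a) cat \<Rightarrow> ('o,'a) simplex \<Rightarrow> nat \<Rightarrow> (nat \<Rightarrow> nat) \<Rightarrow> ('o,'a) simplex" where
  "precomp C Y q \<xi> = (objS C Y (\<xi> 0), map (\<lambda>i. chain_comp C Y (\<xi> i) (\<xi> (Suc i))) [0..<q])"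

definition opmap :: "nat \<Rightarrow> nat \<Rightarrow> (nat \<Rightarrow> nat) \<Rightarrow> bool" where
  "opmap p q \<xi> \<longleftrightarrow> \<xi> \<in> {0..p} \<rightarrow>\<^sub>E {0..q} \<and> mono_on {0..p} \<xi>"

type_synonym ('o,'a) dmor = "('o,'a) simplex \<times> (nat \<Rightarrow> nat) \<times> ('o,'a) simplex"

definition srcM :: "('o,'a) dmor \<Rightarrow> ('o,'a) simplex" where "srcM \<phi> = fst \<phi>"
definition mapM :: "('o,'a) dmor \<Rightarrow> nat \<Rightarrow> nat" where "mapM \<phi> = fst (snd \<phi>)"
definition tgtM :: "('o,'a) dmor \<Rightarrow> ('o,'a) simplex" where "tgtM \<phi> = snd (snd \<phi>)"

text \<open>\<xi>_* : X \<rightarrow> Y, with Y \<circ> \<xi> = X.\<close>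
definition dmor :: "('o,'a) cat \<Rightarrow> ('o,'a) dmor \<Rightarrow> bool" where
  "dmor C \<phi> \<longleftrightarrow> simplex C (srcM \<phi>) \<and> simplex C (tgtM \<phi>) \<and>
     opmap (dimS (srcM \<phi>)) (dimS (tgtM \<phi>)) (mapM \<phi>) \<and>
     precomp C (tgtM \<phi>) (dimS (srcM \<phi>)) (mapM \<phi>) = srcM \<phi>"

definition compM :: "('o,'a) dmor \<Rightarrow> ('o,'a) dmor \<Rightarrow> ('o,'a) dmor" where
  "compM \<psi> \<phi> = (srcM \<phi>, compose {0..dimS (srcM \<phi>)} (mapM \<psi>) (mapM \<phi>), tgtM \<psi>)"

inductive msim :: "('o,'a) cat \<Rightarrow> ('o,'a) dmor \<Rightarrow> ('o,'a) dmor \<Rightarrow> bool" for C where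
  elem: "\<lbrakk> simplex C X; q = dimS X; opmap (Suc q) q s; s ` {0..Suc q} = {0..q};
           opmap q (Suc q) d; \<forall>i\<in>{0..q}. s (d i) = i;
           opmap q (Suc q) d'; \<forall>i\<in>{0..q}. s (d' i) = i \<rbrakk>
         \<Longrightarrow> msim C (X, d, precomp C X (Suc q) s) (X, d', precomp C X (Suc q) s)"
| refl: "dmor C \<phi> \<Longrightarrow> msim C \<phi> \<phi>"
| sym: "msim C \<phi> \<psi> \<Longrightarrow> msim C \<psi> \<phi>"
| trans: "msim C \<phi> \<psi> \<Longrightarrow> msim C \<psi> \<chi> \<Longrightarrow> msim C \<phi> \<chi>"
| compL: "\<lbrakk> msim C \<phi> \<phi>'; dmor C \<psi>; srcM \<psi> = tgtM \<phi> \<rbrakk> \<Longrightarrow> msim C (compM \<psi> \<phi>) (compM \<psi> \<phi>')"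
| compR: "\<lbrakk> msim C \<phi> \<phi>'; dmor C \<chi>; tgtM \<chi> = srcM \<phi> \<rbrakk> \<Longrightarrow> msim C (compM \<phi> \<chi>) (compM \<phi>' \<chi>)"

definition mclass :: "('o,'a) cat \<Rightarrow> ('o,'a) dmor \<Rightarrow> ('o,'a) dmor set" where
  "mclass C \<phi> = {\<psi>. msim C \<phi> \<psi>}"

text \<open>Objects of Sd(C): the non-degenerate simplices; arrows: \<sim>-classes of
  morphisms of \<Delta>/C between non-degenerate simplices.\<close>
definition Sd_arrs :: "('o,'a) cat \<Rightarrow> ('o,'a) dmor set set" where
  "Sd_arrs C = {mclass C \<phi> | \<phi>. dmor C \<phi> \<and> nondeg C (srcM \<phi>) \<and> nondeg C (tgtM \<phi>)}"

definition eps_obj :: "('o,'a) cat \<Rightarrow> ('o,'a) simplex \<Rightarrow> 'o" where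
  "eps_obj C X = objS C X (dimS X)"

definition eps_rep :: "('o,'a) cat \<Rightarrow> ('o,'a) dmor \<Rightarrow> 'a" where
  "eps_rep C \<phi> = chain_comp C (tgtM \<phi>) (mapM \<phi> (dimS (srcM \<phi>))) (dimS (tgtM \<phi>))"

definition eps_arr :: "('o,'a) cat \<Rightarrow> ('o,'a) dmor set \<Rightarrow> 'a" where
  "eps_arr C c = eps_rep C (SOME \<phi>. \<phi> \<in> c)"

definition rS :: "('o,'a) cat \<Rightarrow> ('o,'a) simplex \<Rightarrow> ('o,'a) simplex" where
  "rS C X = (fst X, filter (\<lambda>f. \<not> is_id C f) (snd X))"

definition alphaS :: "('o,'a) cat \<Rightarrow> ('o,'a) simplex \<Rightarrow> nat \<Rightarrow> nat" where
  "alphaS C X = restrict (\<lambda>i. length (filter (\<lambda>f. \<not> is_id C f) (take i (snd X)))) {0..dimS X}"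

definition fS :: "('o \<Rightarrow> 'p) \<Rightarrow> ('a \<Rightarrow> 'b) \<Rightarrow> ('o,'a) simplex \<Rightarrow> ('p,'b) simplex" where
  "fS Fo Fa X = (Fo (fst X), map Fa (snd X))"

definition Sd_obj :: "('p,'b) cat \<Rightarrow> ('o \<Rightarrow> 'p) \<Rightarrow> ('a \<Rightarrow> 'b) \<Rightarrow> ('o,'a) simplex \<Rightarrow> ('p,'b) simplex" where
  "Sd_obj D Fo Fa X = rS D (fS Fo Fa X)"

definition Sd_rep :: "('p,'b) cat \<Rightarrow> ('o \<Rightarrow> 'p) \<Rightarrow> ('a \<Rightarrow> 'b) \<Rightarrow> ('o,'a) dmor \<Rightarrow> ('p,'b) dmor" where
  "Sd_rep D Fo Fa \<phi> =
    (let fX = fS Fo Fa (srcM \<phi>); fY = fS Fo Fa (tgtM \<phi>);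
         p = dimS (rS D fX);
         \<sigma> = (SOME \<sigma>. opmap p (dimS fX) \<sigma> \<and> (\<forall>i\<in>{0..p}. alphaS D fX (\<sigma> i) = i))
     in (rS D fX, restrict (alphaS D fY \<circ> mapM \<phi> \<circ> \<sigma>) {0..p}, rS D fY))"

definition Sd_arr :: "('o,'a) cat \<Rightarrow> ('p,'b) cat \<Rightarrow> ('o \<Rightarrow> 'p) \<Rightarrow> ('a \<Rightarrow> 'b)
                      \<Rightarrow> ('o,'a) dmor set \<Rightarrow> ('p,'b) dmor set" where
  "Sd_arr C D Fo Fa c = mclass D (Sd_rep D Fo Fa (SOME \<phi>. \<phi> \<in> c))"

end

theory Submission
  imports Defs
begin

text \<open>
  Both \<open>\<epsilon>\<close> and \<open>Sd(f)\<close> are computed on representatives \<open>\<xi>\<^sub>* : X \<rightarrow> Y\<close>. The value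
  \<open>\<epsilon>(\<xi>\<^sub>*) = Y(\<xi>(q\<^sub>X) \<rightarrow> q\<^sub>Y)\<close> is multiplicative and agrees on the two sides of every
  elementary pair, hence is constant on \<open>\<sim>\<close>-classes. The morphism \<open>Sd(f)[\<xi>\<^sub>*]\<close> arises
  from \<open>\<xi>\<^sub>* : f \<circ> X \<rightarrow> f \<circ> Y\<close> by deleting identity arrows: the functor carries the
  composite \<open>Y(\<xi>(q\<^sub>X) \<rightarrow> q\<^sub>Y)\<close> to the corresponding composite of \<open>f \<circ> Y\<close>, deleting
  identities does not change composites, and the section \<open>\<sigma>\<close> of \<open>\<alpha>\<^bsub>f\<circ>X\<^esub>\<close> only
  moves the last vertex of \<open>f \<circ> X\<close> along identity arrows.
\<close>

lemma categoryD:
  assumes "category C"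
  shows "f \<in> Arr C \<Longrightarrow> Dom C f \<in> Obj C" "f \<in> Arr C \<Longrightarrow> Cod C f \<in> Obj C"
    "x \<in> Obj C \<Longrightarrow> Id C x \<in> Arr C" "x \<in> Obj C \<Longrightarrow> Dom C (Id C x) = x"
    "x \<in> Obj C \<Longrightarrow> Cod C (Id C x) = x"
    "f \<in> Arr C \<Longrightarrow> g \<in> Arr C \<Longrightarrow> Cod C f = Dom C g \<Longrightarrow> Comp C g f \<in> Arr C"
    "f \<in> Arr C \<Longrightarrow> g \<in> Arr C \<Longrightarrow> Cod C f = Dom C g \<Longrightarrow> Dom C (Comp C g f) = Dom C f"
    "f \<in> Arr C \<Longrightarrow> g \<in> Arr C \<Longrightarrow> Cod C f = Dom C g \<Longrightarrow> Cod C (Comp C g f) = Cod C g"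
    "f \<in> Arr C \<Longrightarrow> Comp C f (Id C (Dom C f)) = f" "f \<in> Arr C \<Longrightarrow> Comp C (Id C (Cod C f)) f = f"
    "f \<in> Arr C \<Longrightarrow> g \<in> Arr C \<Longrightarrow> h \<in> Arr C \<Longrightarrow> Cod C f = Dom C g \<Longrightarrow> Cod C g = Dom C h \<Longrightarrow>
       Comp C h (Comp C g f) = Comp C (Comp C h g) f"
  using assms unfolding category_def by blast+

lemma functorD:
  assumes "functor C D Fo Fa"
  shows "x \<in> Obj C \<Longrightarrow> Fo x \<in> Obj D" "f \<in> Arr C \<Longrightarrow> Fa f \<in> Arr D"
    "f \<in> Arr C \<Longrightarrow> Dom D (Fa f) = Fo (Dom C f)" "f \<in> Arr C \<Longrightarrow> Cod D (Fa f) = Fo (Cod C f)"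
    "x \<in> Obj C \<Longrightarrow> Fa (Id C x) = Id D (Fo x)"
    "f \<in> Arr C \<Longrightarrow> g \<in> Arr C \<Longrightarrow> Cod C f = Dom C g \<Longrightarrow> Fa (Comp C g f) = Comp D (Fa g) (Fa f)"
  using assms unfolding functor_def by blast+

lemma opmapD:
  assumes "opmap p q \<xi>"
  shows "i \<le> p \<Longrightarrow> \<xi> i \<le> q" "i \<le> j \<Longrightarrow> j \<le> p \<Longrightarrow> \<xi> i \<le> \<xi> j"
  using assms unfolding opmap_def mono_on_def PiE_def by auto

lemma opmap_compose: "opmap q1 q0 \<zeta> \<Longrightarrow> opmap q2 q1 \<xi> \<Longrightarrow> opmap q2 q0 (compose {0..q2} \<zeta> \<xi>)"
  unfolding opmap_def mono_on_def compose_def PiE_def Pi_def extensional_def by auto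

lemma objS_0 [simp]: "objS C X 0 = fst X"
  by (simp add: objS_def)

lemma objS_Suc [simp]: "objS C X (Suc i) = Cod C (snd X ! i)"
  by (simp add: objS_def)

lemma simplexD: "simplex C X \<Longrightarrow> i < dimS X \<Longrightarrow> snd X ! i \<in> Arr C \<and> Dom C (snd X ! i) = objS C X i"
  by (simp add: simplex_def)

lemma simplex_eqI:
  "fst X = fst Y \<Longrightarrow> dimS X = dimS Y \<Longrightarrow> (\<And>k. k < dimS X \<Longrightarrow> snd X ! k = snd Y ! k) \<Longrightarrow> X = Y"
  by (metis dimS_def nth_equalityI prod_eq_iff)

lemma objS_in_Obj:
  assumes "category C" "simplex C X" "i \<le> dimS X"
  shows "objS C X i \<in> Obj C"
  using assms categoryD(2)[OF assms(1)] by (cases i) (auto simp: simplex_def)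

subsection \<open>Composites along a simplex\<close>

lemma chain_comp_refl: "chain_comp C X i i = Id C (objS C X i)"
  by (cases i) auto

lemma chain_comp_arr:
  assumes "category C" "simplex C X" "i \<le> j" "j \<le> dimS X"
  shows "chain_comp C X i j \<in> Arr C \<and> Dom C (chain_comp C X i j) = objS C X i
         \<and> Cod C (chain_comp C X i j) = objS C X j"
  using assms(3,4)
proof (induction j)
  case 0
  then show ?case using objS_in_Obj[OF assms(1,2), of 0] categoryD[OF assms(1)] by auto
next
  case (Suc j)
  show ?case
  proof (cases "i = Suc j")
    case True
    then show ?thesis using objS_in_Obj[OF assms(1,2), of i] Suc.prems categoryD[OF assms(1)]
      by (simp only: chain_comp_refl)
  next
    case False
    then have "i \<le> j" using Suc.prems by simp
    then show ?thesis
      using Suc simplexD[OF assms(2), of j] categoryD(6,7,8)[OF assms(1)] by simp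
  qed
qed

lemma chain_comp_split:
  assumes "category C" "simplex C X" "i \<le> j" "j \<le> k" "k \<le> dimS X"
  shows "chain_comp C X i k = Comp C (chain_comp C X j k) (chain_comp C X i j)"
  using assms(4,5)
proof (induction k)
  case 0
  then show ?case using assms(3) objS_in_Obj[OF assms(1,2), of 0] categoryD(3,5,10)[OF assms(1)]
    by (metis chain_comp_refl le_zero_eq)
next
  case (Suc k)
  show ?case
  proof (cases "j = Suc k")
    case True
    then show ?thesis
      using assms(3) Suc.prems chain_comp_arr[OF assms(1,2), of i "Suc k"] categoryD(10)[OF assms(1)]
      by (metis chain_comp_refl)
  next
    case False
    then have jk: "j \<le> k" using Suc.prems by simp
    have a1: "chain_comp C X i j \<in> Arr C" "Cod C (chain_comp C X i j) = objS C X j"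
      using chain_comp_arr[OF assms(1,2) assms(3)] jk Suc.prems by simp_all
    have a2: "chain_comp C X j k \<in> Arr C" "Cod C (chain_comp C X j k) = objS C X k"
      "Dom C (chain_comp C X j k) = objS C X j"
      using chain_comp_arr[OF assms(1,2) jk] Suc.prems by simp_all
    have "chain_comp C X i (Suc k) = Comp C (snd X ! k) (chain_comp C X i k)"
      using jk assms(3) by simp
    also have "\<dots> = Comp C (Comp C (snd X ! k) (chain_comp C X j k)) (chain_comp C X i j)"
      using Suc jk a1 a2 simplexD[OF assms(2), of k] categoryD(11)[OF assms(1)] by simp
    also have "\<dots> = Comp C (chain_comp C X j (Suc k)) (chain_comp C X i j)"
      using jk by simp
    finally show ?thesis .
  qed
qed

subsection \<open>Restriction of a simplex along an order-preserving map\<close>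

lemma dimS_precomp [simp]: "dimS (precomp C Y q \<xi>) = q"
  by (simp add: precomp_def dimS_def)

lemma precomp_nth: "k < q \<Longrightarrow> snd (precomp C Y q \<xi>) ! k = chain_comp C Y (\<xi> k) (\<xi> (Suc k))"
  by (simp add: precomp_def)

lemma precomp_cong: "(\<And>i. i \<le> q \<Longrightarrow> \<xi> i = \<xi>' i) \<Longrightarrow> precomp C Y q \<xi> = precomp C Y q \<xi>'"
  unfolding precomp_def by auto

lemma objS_precomp:
  assumes "category C" "simplex C Y" "opmap q (dimS Y) \<xi>" "i \<le> q"
  shows "objS C (precomp C Y q \<xi>) i = objS C Y (\<xi> i)"
proof (cases i)
  case 0
  then show ?thesis by (simp add: precomp_def)
next
  case (Suc k)
  then show ?thesis
    using assms(4) precomp_nth[of k q C Y \<xi>] chain_comp_arr[OF assms(1,2), of "\<xi> k" "\<xi> (Suc k)"]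
      opmapD[OF assms(3)] by simp
qed

lemma chain_comp_precomp:
  assumes "category C" "simplex C Y" "opmap q (dimS Y) \<xi>" "i \<le> j" "j \<le> q"
  shows "chain_comp C (precomp C Y q \<xi>) i j = chain_comp C Y (\<xi> i) (\<xi> j)"
  using assms(4,5)
proof (induction j)
  case 0
  then show ?case using objS_precomp[OF assms(1,2,3), of 0] by (simp add: chain_comp_refl)
next
  case (Suc j)
  show ?case
  proof (cases "i = Suc j")
    case True
    then show ?thesis using objS_precomp[OF assms(1,2,3), of i] Suc.prems by (simp only: chain_comp_refl)
  next
    case False
    then have ij: "i \<le> j" using Suc.prems by simp
    have "chain_comp C (precomp C Y q \<xi>) i (Suc j)
        = Comp C (chain_comp C Y (\<xi> j) (\<xi> (Suc j))) (chain_comp C Y (\<xi> i) (\<xi> j))"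
      using ij Suc precomp_nth[of j q C Y \<xi>] by simp
    also have "\<dots> = chain_comp C Y (\<xi> i) (\<xi> (Suc j))"
      using chain_comp_split[OF assms(1,2), of "\<xi> i" "\<xi> j" "\<xi> (Suc j)"] opmapD[OF assms(3)] ij Suc.prems
      by simp
    finally show ?thesis .
  qed
qed

lemma simplex_precomp:
  assumes "category C" "simplex C Y" "opmap q (dimS Y) \<xi>"
  shows "simplex C (precomp C Y q \<xi>)"
  unfolding simplex_def
proof (intro conjI allI impI)
  show "fst (precomp C Y q \<xi>) \<in> Obj C"
    using objS_in_Obj[OF assms(1,2), of "\<xi> 0"] opmapD[OF assms(3)] by (simp add: precomp_def)
  fix i assume "i < dimS (precomp C Y q \<xi>)"
  then show "snd (precomp C Y q \<xi>) ! i \<in> Arr C"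
    "Dom C (snd (precomp C Y q \<xi>) ! i) = objS C (precomp C Y q \<xi>) i"
    using chain_comp_arr[OF assms(1,2), of "\<xi> i" "\<xi> (Suc i)"] opmapD[OF assms(3)]
      objS_precomp[OF assms, of i] by (auto simp add: precomp_nth)
qed

lemma precomp_precomp:
  assumes "category C" "simplex C Y" "opmap q1 (dimS Y) \<zeta>" "opmap q2 q1 \<xi>"
  shows "precomp C (precomp C Y q1 \<zeta>) q2 \<xi> = precomp C Y q2 (\<zeta> \<circ> \<xi>)"
proof (rule simplex_eqI)
  show "fst (precomp C (precomp C Y q1 \<zeta>) q2 \<xi>) = fst (precomp C Y q2 (\<zeta> \<circ> \<xi>))"
    using objS_precomp[OF assms(1,2,3), of "\<xi> 0"] opmapD[OF assms(4)] by (simp add: precomp_def)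
  fix k assume "k < dimS (precomp C (precomp C Y q1 \<zeta>) q2 \<xi>)"
  then show "snd (precomp C (precomp C Y q1 \<zeta>) q2 \<xi>) ! k = snd (precomp C Y q2 (\<zeta> \<circ> \<xi>)) ! k"
    using chain_comp_precomp[OF assms(1,2,3), of "\<xi> k" "\<xi> (Suc k)"] opmapD[OF assms(4)]
    by (simp add: precomp_nth)
qed simp

lemma precomp_id:
  assumes "category C" "simplex C X"
  shows "precomp C X (dimS X) id = X"
proof (rule simplex_eqI)
  show "fst (precomp C X (dimS X) id) = fst X" by (simp add: precomp_def)
  fix k assume "k < dimS (precomp C X (dimS X) id)"
  then show "snd (precomp C X (dimS X) id) ! k = snd X ! k"
    using simplexD[OF assms(2), of k] categoryD(9)[OF assms(1), of "snd X ! k"]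
    by (simp add: chain_comp_refl precomp_nth)
qed simp

subsection \<open>The functor \<open>\<epsilon>\<close> on representatives\<close>

lemma dmorD:
  assumes "dmor C \<phi>"
  shows "simplex C (srcM \<phi>)" "simplex C (tgtM \<phi>)" "opmap (dimS (srcM \<phi>)) (dimS (tgtM \<phi>)) (mapM \<phi>)"
    "precomp C (tgtM \<phi>) (dimS (srcM \<phi>)) (mapM \<phi>) = srcM \<phi>"
  using assms by (simp_all add: dmor_def)

lemma dmor_compM:
  assumes C: "category C" and "dmor C \<phi>" "dmor C \<psi>" "srcM \<psi> = tgtM \<phi>"
  shows "dmor C (compM \<psi> \<phi>)"
proof -
  note \<phi> = dmorD[OF assms(2)] and \<psi> = dmorD[OF assms(3), unfolded assms(4)]
  let ?X = "srcM \<phi>" and ?\<xi> = "mapM \<phi>" and ?\<zeta> = "mapM \<psi>"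
  have "precomp C (tgtM \<psi>) (dimS ?X) (compose {0..dimS ?X} ?\<zeta> ?\<xi>) = precomp C (tgtM \<psi>) (dimS ?X) (?\<zeta> \<circ> ?\<xi>)"
    by (rule precomp_cong) (simp add: compose_def)
  also have "\<dots> = ?X"
    using precomp_precomp[OF C \<psi>(2,3)] \<phi>(3,4) \<psi>(4) assms(4) by simp
  finally show ?thesis
    using \<phi>(1) \<psi>(2) opmap_compose[OF \<psi>(3) \<phi>(3)] assms(4)
    by (simp add: dmor_def compM_def srcM_def tgtM_def mapM_def)
qed

lemma eps_rep_compM:
  assumes C: "category C" and "dmor C \<phi>" "dmor C \<psi>" "srcM \<psi> = tgtM \<phi>"
  shows "eps_rep C (compM \<psi> \<phi>) = Comp C (eps_rep C \<psi>) (eps_rep C \<phi>)"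
proof -
  note \<phi> = dmorD[OF assms(2)] and \<psi> = dmorD[OF assms(3), unfolded assms(4)]
  let ?X = "srcM \<phi>" and ?Y = "tgtM \<phi>" and ?Z = "tgtM \<psi>" and ?\<xi> = "mapM \<phi>" and ?\<zeta> = "mapM \<psi>"
  have a1: "?\<xi> (dimS ?X) \<le> dimS ?Y" using opmapD(1)[OF \<phi>(3)] by simp
  have a2: "?\<zeta> (?\<xi> (dimS ?X)) \<le> ?\<zeta> (dimS ?Y)" "?\<zeta> (dimS ?Y) \<le> dimS ?Z"
    using opmapD[OF \<psi>(3)] a1 assms(4) by auto
  have "eps_rep C (compM \<psi> \<phi>) = chain_comp C ?Z (?\<zeta> (?\<xi> (dimS ?X))) (dimS ?Z)"
    by (simp add: eps_rep_def compM_def srcM_def tgtM_def mapM_def compose_def)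
  also have "\<dots> = Comp C (chain_comp C ?Z (?\<zeta> (dimS ?Y)) (dimS ?Z))
                         (chain_comp C ?Z (?\<zeta> (?\<xi> (dimS ?X))) (?\<zeta> (dimS ?Y)))"
    using chain_comp_split[OF C \<psi>(2) a2] by simp
  also have "chain_comp C ?Z (?\<zeta> (?\<xi> (dimS ?X))) (?\<zeta> (dimS ?Y)) = chain_comp C ?Y (?\<xi> (dimS ?X)) (dimS ?Y)"
    using chain_comp_precomp[OF C \<psi>(2,3) a1] \<psi>(4) assms(4) by simp
  finally show ?thesis using assms(4) by (simp add: eps_rep_def)
qed

lemma msim_invariants:
  assumes "msim C \<phi> \<psi>" "category C"
  shows "dmor C \<phi> \<and> dmor C \<psi> \<and> srcM \<phi> = srcM \<psi> \<and> tgtM \<phi> = tgtM \<psi> \<and> eps_rep C \<phi> = eps_rep C \<psi>"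
  using assms(1)
proof induction
  case (elem X q s d d')
  let ?Y = "precomp C X (Suc q) s"
  have s: "opmap (Suc q) (dimS X) s" using elem by simp
  have "dmor C (X, e, ?Y) \<and> eps_rep C (X, e, ?Y) = chain_comp C X q (s (Suc q))"
    if e: "opmap q (Suc q) e" "\<forall>i\<in>{0..q}. s (e i) = i" for e
  proof
    have "precomp C ?Y q e = precomp C X q (s \<circ> e)"
      using precomp_precomp[OF assms(2) elem(1) s e(1)] .
    also have "\<dots> = precomp C X q id" by (rule precomp_cong) (use e in auto)
    also have "\<dots> = X" using precomp_id[OF assms(2) elem(1)] elem(2) by simp
    finally show "dmor C (X, e, ?Y)"
      using elem(1,2) simplex_precomp[OF assms(2) elem(1) s] e
      by (simp add: dmor_def srcM_def tgtM_def mapM_def)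
    show "eps_rep C (X, e, ?Y) = chain_comp C X q (s (Suc q))"
      using chain_comp_precomp[OF assms(2) elem(1) s, of "e q" "Suc q"] opmapD(1)[OF e(1), of q] e(2) elem(2)
      by (simp add: eps_rep_def srcM_def tgtM_def mapM_def)
  qed
  then show ?case using elem by (simp add: srcM_def tgtM_def)
next
  case (compL \<phi> \<phi>' \<psi>)
  then show ?case
    using dmor_compM[OF assms(2), of \<phi> \<psi>] dmor_compM[OF assms(2), of \<phi>' \<psi>]
      eps_rep_compM[OF assms(2), of \<phi> \<psi>] eps_rep_compM[OF assms(2), of \<phi>' \<psi>]
    by (simp add: compM_def srcM_def tgtM_def)
next
  case (compR \<phi> \<phi>' \<chi>)
  then show ?case
    using dmor_compM[OF assms(2), of \<chi> \<phi>] dmor_compM[OF assms(2), of \<chi> \<phi>']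
      eps_rep_compM[OF assms(2), of \<chi> \<phi>] eps_rep_compM[OF assms(2), of \<chi> \<phi>']
    by (simp add: compM_def srcM_def tgtM_def mapM_def)
qed simp_all

lemma msim_some_mclass: "dmor C \<phi> \<Longrightarrow> msim C \<phi> (SOME \<psi>. \<psi> \<in> mclass C \<phi>)"
  using someI[of "\<lambda>\<psi>. \<psi> \<in> mclass C \<phi>" \<phi>] by (simp add: mclass_def msim.refl)

lemma eps_arr_mclass:
  assumes "category C" "dmor C \<phi>"
  shows "eps_arr C (mclass C \<phi>) = eps_rep C \<phi>"
  using msim_invariants[OF msim_some_mclass[OF assms(2)] assms(1)] by (simp add: eps_arr_def)

subsection \<open>Applying a functor to simplices\<close>

lemma dimS_fS [simp]: "dimS (fS Fo Fa Y) = dimS Y"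
  by (simp add: fS_def dimS_def)

lemma objS_fS:
  assumes "functor C D Fo Fa" "simplex C Y" "i \<le> dimS Y"
  shows "objS D (fS Fo Fa Y) i = Fo (objS C Y i)"
proof (cases i)
  case 0
  then show ?thesis by (simp add: fS_def)
next
  case (Suc k)
  then show ?thesis
    using assms(3) simplexD[OF assms(2), of k] functorD(4)[OF assms(1)] by (simp add: fS_def dimS_def)
qed

lemma simplex_fS:
  assumes "functor C D Fo Fa" "simplex C Y"
  shows "simplex D (fS Fo Fa Y)"
  unfolding simplex_def
proof (intro conjI allI impI)
  show "fst (fS Fo Fa Y) \<in> Obj D"
    using assms functorD(1)[OF assms(1)] by (simp add: fS_def simplex_def)
  fix i assume "i < dimS (fS Fo Fa Y)"
  then show "snd (fS Fo Fa Y) ! i \<in> Arr D" "Dom D (snd (fS Fo Fa Y) ! i) = objS D (fS Fo Fa Y) i"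
    using simplexD[OF assms(2), of i] functorD[OF assms(1)] objS_fS[OF assms, of i]
    by (auto simp: fS_def dimS_def)
qed

lemma Fa_chain_comp:
  assumes "category C" "functor C D Fo Fa" "simplex C Y" "i \<le> j" "j \<le> dimS Y"
  shows "Fa (chain_comp C Y i j) = chain_comp D (fS Fo Fa Y) i j"
  using assms(4,5)
proof (induction j)
  case 0
  then show ?case
    using objS_in_Obj[OF assms(1,3), of 0] functorD(5)[OF assms(2)] objS_fS[OF assms(2,3), of 0]
    by (simp only: chain_comp_refl) simp
next
  case (Suc j)
  show ?case
  proof (cases "i = Suc j")
    case True
    then show ?thesis
      using objS_in_Obj[OF assms(1,3), of i] functorD(5)[OF assms(2)] objS_fS[OF assms(2,3), of i] Suc.prems
      by (simp only: chain_comp_refl)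
  next
    case False
    then have ij: "i \<le> j" using Suc.prems by simp
    have j: "j < length (snd Y)" using Suc.prems by (simp add: dimS_def)
    have "chain_comp C Y i j \<in> Arr C \<and> Cod C (chain_comp C Y i j) = objS C Y j"
      using chain_comp_arr[OF assms(1,3) ij] Suc.prems by simp
    then show ?thesis
      using Suc ij j simplexD[OF assms(3), of j] functorD(6)[OF assms(2), of "chain_comp C Y i j" "snd Y ! j"]
      by (simp add: fS_def dimS_def)
  qed
qed

lemma fS_precomp:
  assumes "category C" "functor C D Fo Fa" "simplex C Y" "opmap q (dimS Y) \<xi>"
  shows "fS Fo Fa (precomp C Y q \<xi>) = precomp D (fS Fo Fa Y) q \<xi>"
proof (rule simplex_eqI)
  show "fst (fS Fo Fa (precomp C Y q \<xi>)) = fst (precomp D (fS Fo Fa Y) q \<xi>)"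
    using objS_fS[OF assms(2,3), of "\<xi> 0"] opmapD[OF assms(4)] by (simp add: fS_def precomp_def)
  fix k assume "k < dimS (fS Fo Fa (precomp C Y q \<xi>))"
  then have "k < q" by simp
  then show "snd (fS Fo Fa (precomp C Y q \<xi>)) ! k = snd (precomp D (fS Fo Fa Y) q \<xi>) ! k"
    using Fa_chain_comp[OF assms(1,2,3), of "\<xi> k" "\<xi> (Suc k)"] opmapD[OF assms(4)]
    by (simp add: fS_def precomp_nth precomp_def[of C])
qed simp

definition fM :: "('o \<Rightarrow> 'p) \<Rightarrow> ('a \<Rightarrow> 'b) \<Rightarrow> ('o,'a) dmor \<Rightarrow> ('p,'b) dmor" where
  "fM Fo Fa \<phi> = (fS Fo Fa (srcM \<phi>), mapM \<phi>, fS Fo Fa (tgtM \<phi>))"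

lemma dmor_fM:
  assumes "category C" "functor C D Fo Fa" "dmor C \<phi>"
  shows "dmor D (fM Fo Fa \<phi>)"
proof -
  note \<phi> = dmorD[OF assms(3)]
  have "precomp D (fS Fo Fa (tgtM \<phi>)) (dimS (srcM \<phi>)) (mapM \<phi>) = fS Fo Fa (srcM \<phi>)"
    using fS_precomp[OF assms(1,2) \<phi>(2,3)] \<phi>(4) by simp
  then show ?thesis
    using \<phi>(3) simplex_fS[OF assms(2) \<phi>(1)] simplex_fS[OF assms(2) \<phi>(2)]
    by (simp add: dmor_def fM_def srcM_def tgtM_def mapM_def)
qed

lemma eps_rep_fM:
  assumes "category C" "functor C D Fo Fa" "dmor C \<phi>"
  shows "Fa (eps_rep C \<phi>) = eps_rep D (fM Fo Fa \<phi>)"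
  using Fa_chain_comp[OF assms(1,2) dmorD(2)[OF assms(3)]] opmapD(1)[OF dmorD(3)[OF assms(3)]]
  by (simp add: eps_rep_def fM_def srcM_def tgtM_def mapM_def)

subsection \<open>Deleting identity arrows\<close>

lemma alphaS_eq: "j \<le> dimS W \<Longrightarrow> alphaS C W j = length (filter (\<lambda>f. \<not> is_id C f) (take j (snd W)))"
  by (simp add: alphaS_def)

lemma alphaS_0 [simp]: "alphaS C W 0 = 0"
  by (simp add: alphaS_def)

lemma alphaS_Suc:
  "j < dimS W \<Longrightarrow> alphaS C W (Suc j) = alphaS C W j + (if is_id C (snd W ! j) then 0 else 1)"
  by (simp add: alphaS_eq take_Suc_conv_app_nth dimS_def)

lemma alphaS_mono: "i \<le> j \<Longrightarrow> j \<le> dimS W \<Longrightarrow> alphaS C W i \<le> alphaS C W j"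
proof (induction j)
  case (Suc j)
  then show ?case using alphaS_Suc[of j W C] by (cases "i = Suc j") auto
qed simp

lemma dimS_rS: "dimS (rS C W) = alphaS C W (dimS W)"
  by (simp add: alphaS_eq rS_def dimS_def)

lemma rS_nth:
  assumes "j < dimS W" "\<not> is_id C (snd W ! j)"
  shows "snd (rS C W) ! (alphaS C W j) = snd W ! j"
proof -
  let ?P = "\<lambda>f. \<not> is_id C f"
  have "snd W = take j (snd W) @ snd W ! j # drop (Suc j) (snd W)"
    using assms(1) id_take_nth_drop by (simp add: dimS_def)
  then have "filter ?P (snd W) = filter ?P (take j (snd W)) @ snd W ! j # filter ?P (drop (Suc j) (snd W))"
    using assms(2) by (metis filter.simps(2) filter_append)
  then show ?thesis using assms by (simp add: rS_def alphaS_eq nth_append)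
qed

lemma simplex_Cons:
  assumes "category C"
  shows "simplex C (x, f # fs) \<longleftrightarrow> x \<in> Obj C \<and> f \<in> Arr C \<and> Dom C f = x \<and> simplex C (Cod C f, fs)"
proof -
  have o: "objS C (x, f # fs) (Suc i) = objS C (Cod C f, fs) i" for i
    by (cases i) auto
  have "(\<forall>i < Suc (length fs). P i) \<longleftrightarrow> P 0 \<and> (\<forall>i < length fs. P (Suc i))" for P
    using less_Suc_eq_0_disj by auto
  then show ?thesis unfolding simplex_def dimS_def using o categoryD(2)[OF assms] by auto
qed

lemma simplex_filter_nonid:
  assumes "category C"
  shows "simplex C (x, fs) \<Longrightarrow> simplex C (x, filter (\<lambda>f. \<not> is_id C f) fs)"
proof (induction fs arbitrary: x)
  case Nil
  then show ?case by simp
next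
  case (Cons f fs)
  then have f: "x \<in> Obj C" "f \<in> Arr C" "Dom C f = x" and fs: "simplex C (Cod C f, fs)"
    using simplex_Cons[OF assms] by simp_all
  show ?case
  proof (cases "is_id C f")
    case True
    then have "Cod C f = x" using f categoryD(5)[OF assms] by (metis is_id_def)
    then show ?thesis using True Cons.IH fs by simp
  next
    case False
    then show ?thesis using Cons.IH[OF fs] f by (simp add: simplex_Cons[OF assms])
  qed
qed

lemma simplex_rS: "category C \<Longrightarrow> simplex C W \<Longrightarrow> simplex C (rS C W)"
  using simplex_filter_nonid[of C "fst W" "snd W"] by (simp add: rS_def)

lemma objS_rS:
  assumes "category C" "simplex C W" "j \<le> dimS W"
  shows "objS C (rS C W) (alphaS C W j) = objS C W j"
  using assms(3)
proof (induction j)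
  case 0
  then show ?case by (simp add: rS_def)
next
  case (Suc j)
  then have j: "j < dimS W" by simp
  show ?case
  proof (cases "is_id C (snd W ! j)")
    case True
    then have "snd W ! j = Id C (objS C W j)"
      using simplexD[OF assms(2) j] by (simp add: is_id_def)
    then have "Cod C (snd W ! j) = objS C W j"
      using categoryD(5)[OF assms(1)] objS_in_Obj[OF assms(1,2), of j] j by simp
    then show ?thesis using True Suc j alphaS_Suc[OF j, of C] by simp
  next
    case False
    then show ?thesis using alphaS_Suc[OF j, of C] rS_nth[OF j False] by simp
  qed
qed

lemma chain_comp_rS:
  assumes "category C" "simplex C W" "i \<le> j" "j \<le> dimS W"
  shows "chain_comp C (rS C W) (alphaS C W i) (alphaS C W j) = chain_comp C W i j"
  using assms(3,4)
proof (induction j)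
  case 0
  then show ?case using objS_rS[OF assms(1,2), of 0] by (simp only: chain_comp_refl le_zero_eq)
next
  case (Suc j)
  show ?case
  proof (cases "i = Suc j")
    case True
    then show ?thesis using objS_rS[OF assms(1,2), of i] Suc.prems by (simp only: chain_comp_refl)
  next
    case False
    then have ij: "i \<le> j" and j: "j < dimS W" using Suc.prems by auto
    have IH: "chain_comp C (rS C W) (alphaS C W i) (alphaS C W j) = chain_comp C W i j"
      using Suc ij by simp
    show ?thesis
    proof (cases "is_id C (snd W ! j)")
      case True
      then have "snd W ! j = Id C (objS C W j)"
        using simplexD[OF assms(2) j] by (simp add: is_id_def)
      then have "chain_comp C W i (Suc j) = chain_comp C W i j"
        using ij chain_comp_arr[OF assms(1,2) ij] j categoryD(10)[OF assms(1), of "chain_comp C W i j"]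
        by simp
      then show ?thesis using IH alphaS_Suc[OF j, of C] True by simp
    next
      case False
      then show ?thesis
        using IH alphaS_Suc[OF j, of C] rS_nth[OF j False] alphaS_mono[OF ij, of W C] j ij by simp
    qed
  qed
qed

lemma chain_comp_eq_Id_if_alphaS_eq:
  assumes "category C" "simplex C W" "i \<le> j" "j \<le> dimS W" "alphaS C W i = alphaS C W j"
  shows "chain_comp C W i j = Id C (objS C W j)"
proof -
  have "chain_comp C W i j = chain_comp C (rS C W) (alphaS C W j) (alphaS C W j)"
    using chain_comp_rS[OF assms(1-4)] assms(5) by simp
  also have "\<dots> = Id C (objS C W j)"
    using objS_rS[OF assms(1,2,4)] by (simp add: chain_comp_refl)
  finally show ?thesis .
qed

definition is_alpha_section :: "('o,'a) cat \<Rightarrow> ('o,'a) simplex \<Rightarrow> (nat \<Rightarrow> nat) \<Rightarrow> bool" where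
  "is_alpha_section C W \<sigma> \<longleftrightarrow>
     opmap (dimS (rS C W)) (dimS W) \<sigma> \<and> (\<forall>i\<in>{0..dimS (rS C W)}. alphaS C W (\<sigma> i) = i)"

lemma is_alpha_sectionD:
  assumes "is_alpha_section C W \<sigma>" "i \<le> dimS (rS C W)"
  shows "\<sigma> i \<le> dimS W" "alphaS C W (\<sigma> i) = i" "j \<le> i \<Longrightarrow> \<sigma> j \<le> \<sigma> i"
  using assms opmapD[of "dimS (rS C W)" "dimS W" \<sigma>] by (auto simp: is_alpha_section_def)

lemma alpha_section_exists: "\<exists>\<sigma>. is_alpha_section C W \<sigma>"
proof -
  define p where "p = dimS (rS C W)"
  define n where "n = dimS W"
  have pn: "p = alphaS C W n" using dimS_rS unfolding p_def n_def .
  define \<sigma> where "\<sigma> = restrict (\<lambda>i. LEAST j. i \<le> alphaS C W j) {0..p}"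
  have L: "i \<le> alphaS C W (LEAST j. i \<le> alphaS C W j)" "(LEAST j. i \<le> alphaS C W j) \<le> n"
    if "i \<le> p" for i
    using that pn by (auto intro: LeastI Least_le)
  have A: "alphaS C W (\<sigma> i) = i" if "i \<le> p" for i
  proof -
    let ?l = "LEAST j. i \<le> alphaS C W j"
    have "alphaS C W ?l \<le> i"
    proof (cases ?l)
      case (Suc m)
      then have "\<not> i \<le> alphaS C W m" using not_less_Least[of m] by (metis lessI)
      moreover have "m < n" using L(2)[OF that] Suc by simp
      ultimately show ?thesis using alphaS_Suc[of m W C] Suc n_def by auto
    qed simp
    then show ?thesis using L(1)[OF that] that by (simp add: \<sigma>_def)
  qed
  have "opmap p n \<sigma>"
    unfolding opmap_def
  proof
    show "\<sigma> \<in> {0..p} \<rightarrow>\<^sub>E {0..n}" using L(2) by (auto simp: \<sigma>_def)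
    show "mono_on {0..p} \<sigma>"
    proof (rule mono_onI)
      fix r s assume rs: "r \<in> {0..p}" "s \<in> {0..p}" "r \<le> s"
      then have "r \<le> alphaS C W (LEAST j. s \<le> alphaS C W j)" using L(1)[of s] by auto
      then show "\<sigma> r \<le> \<sigma> s" using rs by (auto simp: \<sigma>_def intro: Least_le)
    qed
  qed
  then show ?thesis using A unfolding is_alpha_section_def p_def n_def by auto
qed

subsection \<open>The reduction of a morphism of \<open>\<Delta>/C\<close>\<close>

definition rM :: "('o,'a) cat \<Rightarrow> (nat \<Rightarrow> nat) \<Rightarrow> ('o,'a) dmor \<Rightarrow> ('o,'a) dmor" where
  "rM C \<sigma> \<phi> = (rS C (srcM \<phi>),
                restrict (alphaS C (tgtM \<phi>) \<circ> mapM \<phi> \<circ> \<sigma>) {0..dimS (rS C (srcM \<phi>))},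
                rS C (tgtM \<phi>))"

context
  fixes C :: "('o,'a) cat" and \<phi> :: "('o,'a) dmor" and \<sigma> :: "nat \<Rightarrow> nat"
  assumes C: "category C" and \<phi>: "dmor C \<phi>" and \<sigma>: "is_alpha_section C (srcM \<phi>) \<sigma>"
begin

lemma opmap_mapM_rM: "opmap (dimS (rS C (srcM \<phi>))) (dimS (rS C (tgtM \<phi>))) (mapM (rM C \<sigma> \<phi>))"
proof -
  let ?Y = "tgtM \<phi>" and ?\<xi> = "mapM \<phi>"
  have \<xi>: "i \<le> dimS (srcM \<phi>) \<Longrightarrow> ?\<xi> i \<le> dimS ?Y" "i \<le> j \<Longrightarrow> j \<le> dimS (srcM \<phi>) \<Longrightarrow> ?\<xi> i \<le> ?\<xi> j" for i j
    using opmapD[OF dmorD(3)[OF \<phi>]] by auto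
  show ?thesis
    unfolding opmap_def
  proof
    show "mapM (rM C \<sigma> \<phi>) \<in> {0..dimS (rS C (srcM \<phi>))} \<rightarrow>\<^sub>E {0..dimS (rS C ?Y)}"
      using is_alpha_sectionD(1)[OF \<sigma>] \<xi>(1) alphaS_mono[of _ "dimS ?Y" ?Y C]
      by (auto simp: rM_def mapM_def dimS_rS)
    show "mono_on {0..dimS (rS C (srcM \<phi>))} (mapM (rM C \<sigma> \<phi>))"
      by (rule mono_onI)
        (use is_alpha_sectionD[OF \<sigma>] \<xi> alphaS_mono[of _ _ ?Y C] in \<open>auto simp: rM_def mapM_def\<close>)
  qed
qed

lemma precomp_rM: "precomp C (rS C (tgtM \<phi>)) (dimS (rS C (srcM \<phi>))) (mapM (rM C \<sigma> \<phi>)) = rS C (srcM \<phi>)"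
proof -
  let ?X = "srcM \<phi>" and ?Y = "tgtM \<phi>" and ?\<xi> = "mapM \<phi>" and ?p = "dimS (rS C (srcM \<phi>))"
  note sX = dmorD(1)[OF \<phi>] and sY = dmorD(2)[OF \<phi>] and \<xi> = opmapD[OF dmorD(3)[OF \<phi>]]
    and X_eq = dmorD(4)[OF \<phi>]
  note s = is_alpha_sectionD[OF \<sigma>]
  show ?thesis
  proof (rule simplex_eqI)
    have "fst (precomp C (rS C ?Y) ?p (mapM (rM C \<sigma> \<phi>))) = objS C (rS C ?Y) (alphaS C ?Y (?\<xi> (\<sigma> 0)))"
      by (simp add: precomp_def rM_def mapM_def)
    also have "\<dots> = objS C ?Y (?\<xi> (\<sigma> 0))" using objS_rS[OF C sY] \<xi>(1) s(1) by simp
    also have "\<dots> = objS C ?X (\<sigma> 0)"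
      using objS_precomp[OF C sY dmorD(3)[OF \<phi>], of "\<sigma> 0"] s(1) X_eq by simp
    also have "\<dots> = fst (rS C ?X)" using objS_rS[OF C sX, of "\<sigma> 0"] s(1,2)[of 0] by (simp add: rS_def)
    finally show "fst (precomp C (rS C ?Y) ?p (mapM (rM C \<sigma> \<phi>))) = fst (rS C ?X)" .
  next
    fix k assume "k < dimS (precomp C (rS C ?Y) ?p (mapM (rM C \<sigma> \<phi>)))"
    then have k: "k < ?p" by simp
    have kk: "\<sigma> k \<le> \<sigma> (Suc k)" "\<sigma> (Suc k) \<le> dimS ?X" using s k by auto
    have kk2: "?\<xi> (\<sigma> k) \<le> ?\<xi> (\<sigma> (Suc k))" "?\<xi> (\<sigma> (Suc k)) \<le> dimS ?Y" using \<xi> kk by auto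
    have "snd (precomp C (rS C ?Y) ?p (mapM (rM C \<sigma> \<phi>))) ! k
        = chain_comp C (rS C ?Y) (alphaS C ?Y (?\<xi> (\<sigma> k))) (alphaS C ?Y (?\<xi> (\<sigma> (Suc k))))"
      using k by (simp add: precomp_nth rM_def mapM_def)
    also have "\<dots> = chain_comp C ?Y (?\<xi> (\<sigma> k)) (?\<xi> (\<sigma> (Suc k)))"
      using chain_comp_rS[OF C sY kk2] by simp
    also have "\<dots> = chain_comp C ?X (\<sigma> k) (\<sigma> (Suc k))"
      using chain_comp_precomp[OF C sY dmorD(3)[OF \<phi>] kk] X_eq by simp
    also have "\<dots> = chain_comp C (rS C ?X) k (Suc k)"
      using chain_comp_rS[OF C sX kk] s(2)[of k] s(2)[of "Suc k"] k by simp
    also have "\<dots> = snd (rS C ?X) ! k"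
      using precomp_nth[OF k, of C "rS C ?X" id] precomp_id[OF C simplex_rS[OF C sX]] by simp
    finally show "snd (precomp C (rS C ?Y) ?p (mapM (rM C \<sigma> \<phi>))) ! k = snd (rS C ?X) ! k" .
  qed simp
qed

lemma dmor_rM: "dmor C (rM C \<sigma> \<phi>)"
  using simplex_rS[OF C dmorD(1)[OF \<phi>]] simplex_rS[OF C dmorD(2)[OF \<phi>]] opmap_mapM_rM precomp_rM
  by (simp add: dmor_def rM_def srcM_def tgtM_def mapM_def)

lemma eps_rep_rM: "eps_rep C (rM C \<sigma> \<phi>) = eps_rep C \<phi>"
proof -
  let ?X = "srcM \<phi>" and ?Y = "tgtM \<phi>" and ?\<xi> = "mapM \<phi>" and ?p = "dimS (rS C (srcM \<phi>))"
  let ?qX = "dimS ?X" and ?qY = "dimS ?Y"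
  note sX = dmorD(1)[OF \<phi>] and sY = dmorD(2)[OF \<phi>] and \<xi> = opmapD[OF dmorD(3)[OF \<phi>]]
    and X_eq = dmorD(4)[OF \<phi>]
  note s = is_alpha_sectionD[OF \<sigma> order_refl]
  have le: "\<sigma> ?p \<le> ?qX" "?\<xi> (\<sigma> ?p) \<le> ?\<xi> ?qX" "?\<xi> ?qX \<le> ?qY" using s \<xi> by auto
  \<comment> \<open>between \<open>\<sigma>(p)\<close> and the last vertex of \<open>X\<close> there are only identity arrows\<close>
  have "chain_comp C ?X (\<sigma> ?p) ?qX = Id C (objS C ?X ?qX)"
    using chain_comp_eq_Id_if_alphaS_eq[OF C sX le(1) order_refl] s(2) by (simp add: dimS_rS)
  then have Id: "chain_comp C ?Y (?\<xi> (\<sigma> ?p)) (?\<xi> ?qX) = Id C (objS C ?Y (?\<xi> ?qX))"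
    using chain_comp_precomp[OF C sY dmorD(3)[OF \<phi>] le(1) order_refl]
      objS_precomp[OF C sY dmorD(3)[OF \<phi>] order_refl] X_eq by simp
  have "eps_rep C (rM C \<sigma> \<phi>) = chain_comp C (rS C ?Y) (alphaS C ?Y (?\<xi> (\<sigma> ?p))) (alphaS C ?Y ?qY)"
    by (simp add: eps_rep_def rM_def srcM_def tgtM_def mapM_def dimS_rS)
  also have "\<dots> = chain_comp C ?Y (?\<xi> (\<sigma> ?p)) ?qY"
    using chain_comp_rS[OF C sY] le by simp
  also have "\<dots> = Comp C (chain_comp C ?Y (?\<xi> ?qX) ?qY) (Id C (objS C ?Y (?\<xi> ?qX)))"
    using chain_comp_split[OF C sY le(2,3)] Id by simp
  also have "\<dots> = chain_comp C ?Y (?\<xi> ?qX) ?qY"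
    using chain_comp_arr[OF C sY le(3)] categoryD(9)[OF C, of "chain_comp C ?Y (?\<xi> ?qX) ?qY"] by simp
  finally show ?thesis by (simp add: eps_rep_def)
qed

end

lemma Sd_rep_eq_rM_fM:
  "Sd_rep D Fo Fa \<phi> = rM D (SOME \<sigma>. is_alpha_section D (fS Fo Fa (srcM \<phi>)) \<sigma>) (fM Fo Fa \<phi>)"
  by (simp add: Sd_rep_def rM_def fM_def is_alpha_section_def srcM_def tgtM_def mapM_def Let_def)

lemma
  assumes "category C" "category D" "functor C D Fo Fa" "dmor C \<phi>"
  shows dmor_Sd_rep: "dmor D (Sd_rep D Fo Fa \<phi>)"
    and eps_rep_Sd_rep: "eps_rep D (Sd_rep D Fo Fa \<phi>) = Fa (eps_rep C \<phi>)"
proof -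
  have "is_alpha_section D (srcM (fM Fo Fa \<phi>)) (SOME \<sigma>. is_alpha_section D (fS Fo Fa (srcM \<phi>)) \<sigma>)"
    using someI_ex[OF alpha_section_exists] by (simp add: fM_def srcM_def)
  note rM = dmor_rM[OF assms(2) dmor_fM[OF assms(1,3,4)] this] eps_rep_rM[OF assms(2) dmor_fM[OF assms(1,3,4)] this]
  show "dmor D (Sd_rep D Fo Fa \<phi>)" using rM(1) by (simp add: Sd_rep_eq_rM_fM)
  show "eps_rep D (Sd_rep D Fo Fa \<phi>) = Fa (eps_rep C \<phi>)"
    using rM(2) eps_rep_fM[OF assms(1,3,4)] by (simp add: Sd_rep_eq_rM_fM)
qed

lemma eps_obj_Sd_obj:
  assumes "category D" "functor C D Fo Fa" "simplex C X"
  shows "eps_obj D (Sd_obj D Fo Fa X) = Fo (eps_obj C X)"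
proof -
  have "eps_obj D (Sd_obj D Fo Fa X) = objS D (rS D (fS Fo Fa X)) (alphaS D (fS Fo Fa X) (dimS X))"
    by (simp add: eps_obj_def Sd_obj_def dimS_rS)
  also have "\<dots> = objS D (fS Fo Fa X) (dimS X)"
    using objS_rS[OF assms(1) simplex_fS[OF assms(2,3)]] by simp
  also have "\<dots> = Fo (eps_obj C X)"
    using objS_fS[OF assms(2,3)] by (simp add: eps_obj_def)
  finally show ?thesis .
qed

theorem lemma26:
  fixes C :: "('o,'a) cat" and D :: "('p,'b) cat"
    and Fo :: "'o \<Rightarrow> 'p" and Fa :: "'a \<Rightarrow> 'b"
  assumes "category C" and "category D" and "functor C D Fo Fa"
  shows "(\<forall>X. nondeg C X \<longrightarrow> Fo (eps_obj C X) = eps_obj D (Sd_obj D Fo Fa X)) \<and>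
         (\<forall>c\<in>Sd_arrs C. Fa (eps_arr C c) = eps_arr D (Sd_arr C D Fo Fa c))"
proof (intro conjI allI impI ballI)
  fix X assume "nondeg C X"
  then show "Fo (eps_obj C X) = eps_obj D (Sd_obj D Fo Fa X)"
    using eps_obj_Sd_obj[OF assms(2,3)] by (simp add: nondeg_def)
next
  fix c assume "c \<in> Sd_arrs C"
  then obtain \<phi> where c: "c = mclass C \<phi>" and "dmor C \<phi>" by (auto simp: Sd_arrs_def)
  define \<psi> where "\<psi> = (SOME \<psi>. \<psi> \<in> c)"
  have \<psi>: "dmor C \<psi>"
    using msim_invariants[OF msim_some_mclass[OF \<open>dmor C \<phi>\<close>] assms(1)] by (simp add: c \<psi>_def)
  have "eps_arr D (Sd_arr C D Fo Fa c) = eps_arr D (mclass D (Sd_rep D Fo Fa \<psi>))"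
    by (simp add: Sd_arr_def \<psi>_def)
  also have "\<dots> = Fa (eps_rep C \<psi>)"
    using eps_arr_mclass[OF assms(2) dmor_Sd_rep[OF assms \<psi>]] eps_rep_Sd_rep[OF assms \<psi>] by simp
  also have "\<dots> = Fa (eps_arr C c)" by (simp add: eps_arr_def \<psi>_def)
  finally show "Fa (eps_arr C c) = eps_arr D (Sd_arr C D Fo Fa c)" by simp
qed

end
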